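(* Let $\sigma$ be any argumentation semantics whose extensions are maximal conflict-free sets (w.r.t. set inclusion). For every two argumentation frameworks $AF=(AR,Attacks)$, $AF'=(AR',Attacks')$ with $AF\preceq_N AF'$: if for all $E\in\sigma(AF)$ there is $E'\in\sigma(AF')$ with $E\subseteq E'$, then for all $E\in\sigma(AF)$ there is $E'\in\sigma(AF')$ with $E'\not\subseteq AR$ or $E'=E$.
   Context: An argumentation framework is a pair $(AR,Attacks)$ with $AR$ a finite set and $Attacks\subseteq AR\times AR$; $a$ attacks $b$ iff $(a,b)\in Attacks$. A set $S\subseteq AR$ is conflict-free iff no element of $S$ attacks an element of $S$. An argumentation semantics $\sigma$ assigns to each argumentation framework a set $\sigma(AF)$ of subsets of $AR$; "$\sigma$'s extensions are maximal conflict-free sets" means that for every $AF$, every $E\in\sigma(AF)$ is a $\subseteq$-maximal conflict-free subset of the argument set of $AF$. $AF\preceq_N AF'$ (normal expansion) iff $AR\subseteq AR'$, $Attacks\subseteq Attacks'$ and no $(a,b)\in Attacks'\setminus Attacks$ has both $a,b\in AR$. *)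

theory Defs
  imports Main
begin

definition is_AF :: "'a set \<Rightarrow> ('a \<times> 'a) set \<Rightarrow> bool" where
  "is_AF AR Att \<longleftrightarrow> finite AR \<and> Att \<subseteq> AR \<times> AR"

definition conflict_free :: "('a \<times> 'a) set \<Rightarrow> 'a set \<Rightarrow> bool" where
  "conflict_free Att S \<longleftrightarrow> (\<forall>a\<in>S. \<forall>b\<in>S. (a, b) \<notin> Att)"

definition maximal_conflict_free :: "'a set \<Rightarrow> ('a \<times> 'a) set \<Rightarrow> 'a set \<Rightarrow> bool" where
  "maximal_conflict_free AR Att S \<longleftrightarrow>
     S \<subseteq> AR \<and> conflict_free Att S \<and>
     (\<forall>T. T \<subseteq> AR \<and> conflict_free Att T \<and> S \<subseteq> T \<longrightarrow> T = S)"

definition normal_expansion ::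
  "'a set \<Rightarrow> ('a \<times> 'a) set \<Rightarrow> 'a set \<Rightarrow> ('a \<times> 'a) set \<Rightarrow> bool" where
  "normal_expansion AR Att AR' Att' \<longleftrightarrow>
     AR \<subseteq> AR' \<and> Att \<subseteq> Att' \<and>
     (\<forall>(a, b) \<in> Att' - Att. \<not> (a \<in> AR \<and> b \<in> AR))"

end

theory Submission
  imports Defs
begin

lemma normal_expansion_conflict_free_iff:
  assumes "normal_expansion AR Att AR' Att'" and "S \<subseteq> AR"
  shows "conflict_free Att' S \<longleftrightarrow> conflict_free Att S"
  using assms unfolding normal_expansion_def conflict_free_def by blast

lemma maximal_conflict_free_superset_eq:
  assumes "maximal_conflict_free AR Att S"
    and "S \<subseteq> T" and "T \<subseteq> AR" and "conflict_free Att T"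
  shows "T = S"
  using assms unfolding maximal_conflict_free_def by blast

lemma maximal_conflict_free_normal_expansion_eq:
  assumes exp: "normal_expansion AR Att AR' Att'"
    and max: "maximal_conflict_free AR Att E"
    and max': "maximal_conflict_free AR' Att' E'"
    and "E \<subseteq> E'" and "E' \<subseteq> AR"
  shows "E' = E"
proof -
  have "conflict_free Att' E'"
    using max' unfolding maximal_conflict_free_def by blast
  then have "conflict_free Att E'"
    using normal_expansion_conflict_free_iff[OF exp \<open>E' \<subseteq> AR\<close>] by blast
  then show ?thesis
    using maximal_conflict_free_superset_eq[OF max] \<open>E \<subseteq> E'\<close> \<open>E' \<subseteq> AR\<close> by blast
qed

theorem proposition28:
  fixes \<sigma> :: "'a set \<Rightarrow> ('a \<times> 'a) set \<Rightarrow> 'a set set"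
    and AR AR' :: "'a set" and Att Att' :: "('a \<times> 'a) set"
  assumes sem_mcf: "\<And>X R E. is_AF X R \<Longrightarrow> E \<in> \<sigma> X R \<Longrightarrow> maximal_conflict_free X R E"
    and AF: "is_AF AR Att" and AF': "is_AF AR' Att'"
    and exp: "normal_expansion AR Att AR' Att'"
    and incl: "\<forall>E \<in> \<sigma> AR Att. \<exists>E' \<in> \<sigma> AR' Att'. E \<subseteq> E'"
  shows "\<forall>E \<in> \<sigma> AR Att. \<exists>E' \<in> \<sigma> AR' Att'. \<not> E' \<subseteq> AR \<or> E' = E"
proof
  fix E assume E: "E \<in> \<sigma> AR Att"
  then obtain E' where E': "E' \<in> \<sigma> AR' Att'" and "E \<subseteq> E'"
    using incl by blast
  have "E' \<subseteq> AR \<Longrightarrow> E' = E"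
    using maximal_conflict_free_normal_expansion_eq[OF exp sem_mcf[OF AF E] sem_mcf[OF AF' E']]
      \<open>E \<subseteq> E'\<close> by blast
  then show "\<exists>E' \<in> \<sigma> AR' Att'. \<not> E' \<subseteq> AR \<or> E' = E"
    using E' by blast
qed

end
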